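(* Let $\mathcal D \subset \mathcal H$ be an (F)-domain and let $\mathcal A \subset \mathcal L^+(\mathcal D)$ be one of: (a) $\mathcal A = \mathcal F(\mathcal D)$; (b) a unital standard $*$-operator algebra; (c) a $*$-ideal of $\mathcal L^+(\mathcal D)$ with $\mathcal A \neq \mathcal F(\mathcal D)$. If $\Phi:\mathcal A\to\mathcal A$ is an additive bijection such that for all $A,B\in\mathcal A$, $A^+B = AB^+ = 0 \iff \Phi(A)^+\Phi(B) = \Phi(A)\Phi(B)^+ = 0$, then $\Phi$ maps rank-one operators to rank-one operators and $\Phi^{-1}$ maps rank-one operators to rank-one operators; in particular $\Phi$ restricts to an additive bijection of $\mathcal F(\mathcal D)$ onto itself preserving rank-one operators in both directions.
   Context: Let $\mathcal H$ be a complex Hilbert space, $\mathcal D$ a dense linear subspace. $\mathcal L^+(\mathcal D)$ denotes the set of linear operators $A$ defined on $\mathcal D$ with $A\mathcal D\subset\mathcal D$ and $A^*\mathcal D \subset \mathcal D$, a $*$-algebra with involution $A^+ = A^*|_{\mathcal D}$. $\mathcal D$ is an (F)-domain if it is a Fréchet space in the graph topology generated by the seminorms $\phi \mapsto \|A\phi\|$, $A \in \mathcal L^+(\mathcal D)$. $\mathcal F(\mathcal D)$ is the ideal of finite rank operators in $\mathcal L^+(\mathcal D)$. A standard ($*$-)operator algebra on $\mathcal D$ is a ($*$-)subalgebra of $\mathcal L^+(\mathcal D)$ containing $\mathcal F(\mathcal D)$; unital means it contains the identity. *)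

theory Defs
  imports Complex_Main
begin

class chilbert = ab_group_add +
  fixes scaleC :: "complex \<Rightarrow> 'a \<Rightarrow> 'a" (infixr \<open>*\<^sub>C\<close> 75)
    and cinner :: "'a \<Rightarrow> 'a \<Rightarrow> complex"
  assumes scaleC_add_right: "a *\<^sub>C (x + y) = a *\<^sub>C x + a *\<^sub>C y"
    and scaleC_add_left: "(a + b) *\<^sub>C x = a *\<^sub>C x + b *\<^sub>C x"
    and scaleC_scaleC: "a *\<^sub>C (b *\<^sub>C x) = (a * b) *\<^sub>C x"
    and scaleC_one: "1 *\<^sub>C x = x"
    and cinner_add_left: "cinner (x + y) z = cinner x z + cinner y z"
    and cinner_scaleC_left: "cinner (a *\<^sub>C x) y = a * cinner x y"
    and cinner_commute: "cinner y x = cnj (cinner x y)"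
    and cinner_nonneg: "0 \<le> Re (cinner x x)"
    and cinner_eq_zero: "cinner x x = 0 \<Longrightarrow> x = 0"
    and complete: "(\<forall>e::real>0. \<exists>N::nat. \<forall>m\<ge>N. \<forall>n\<ge>N. Re (cinner (X m - X n) (X m - X n)) < e)
        \<Longrightarrow> \<exists>L. \<forall>e::real>0. \<exists>N::nat. \<forall>n\<ge>N. Re (cinner (X n - L) (X n - L)) < e"

definition cnorm :: "'a::chilbert \<Rightarrow> real" where
  "cnorm x = sqrt (Re (cinner x x))"

text \<open>Operators on D are represented as functions H \<Rightarrow> H which vanish off D.\<close>

definition dense_subspace :: "'a::chilbert set \<Rightarrow> bool" where
  "dense_subspace D \<longleftrightarrow> 0 \<in> D \<and> (\<forall>x\<in>D. \<forall>y\<in>D. x + y \<in> D) \<and> (\<forall>c. \<forall>x\<in>D. c *\<^sub>C x \<in> D)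
     \<and> (\<forall>x. \<forall>e>0. \<exists>y\<in>D. cnorm (x - y) < e)"

definition is_op_on :: "'a::chilbert set \<Rightarrow> ('a \<Rightarrow> 'a) \<Rightarrow> bool" where
  "is_op_on D A \<longleftrightarrow> (\<forall>x. x \<notin> D \<longrightarrow> A x = 0) \<and> (\<forall>x\<in>D. A x \<in> D)
     \<and> (\<forall>x\<in>D. \<forall>y\<in>D. A (x + y) = A x + A y) \<and> (\<forall>c. \<forall>x\<in>D. A (c *\<^sub>C x) = c *\<^sub>C A x)"

text \<open>B is the restriction to D of the Hilbert space adjoint of A (requiring
that D is contained in dom A* and A* D \<subseteq> D).\<close>
definition is_adj_on :: "'a::chilbert set \<Rightarrow> ('a \<Rightarrow> 'a) \<Rightarrow> ('a \<Rightarrow> 'a) \<Rightarrow> bool" where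
  "is_adj_on D A B \<longleftrightarrow> (\<forall>x. x \<notin> D \<longrightarrow> B x = 0) \<and> (\<forall>x\<in>D. B x \<in> D)
     \<and> (\<forall>\<phi>\<in>D. \<forall>\<psi>\<in>D. cinner (A \<phi>) \<psi> = cinner \<phi> (B \<psi>))"

definition Lplus :: "'a::chilbert set \<Rightarrow> ('a \<Rightarrow> 'a) set" where
  "Lplus D = {A. is_op_on D A \<and> (\<exists>B. is_adj_on D A B)}"

definition ladj :: "'a::chilbert set \<Rightarrow> ('a \<Rightarrow> 'a) \<Rightarrow> ('a \<Rightarrow> 'a)" where
  "ladj D A = (THE B. is_adj_on D A B)"

definition zero_op :: "'a::chilbert \<Rightarrow> 'a" where
  "zero_op = (\<lambda>x. 0)"

definition id_op :: "'a::chilbert set \<Rightarrow> 'a \<Rightarrow> 'a" where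
  "id_op D = (\<lambda>x. if x \<in> D then x else 0)"

definition add_op :: "('a::chilbert \<Rightarrow> 'a) \<Rightarrow> ('a \<Rightarrow> 'a) \<Rightarrow> 'a \<Rightarrow> 'a" where
  "add_op A B = (\<lambda>x. A x + B x)"

definition smult_op :: "complex \<Rightarrow> ('a::chilbert \<Rightarrow> 'a) \<Rightarrow> 'a \<Rightarrow> 'a" where
  "smult_op c A = (\<lambda>x. c *\<^sub>C A x)"

text \<open>The graph topology on D is the locally convex topology given by the
seminorms \<phi> \<mapsto> \<parallel>A\<phi>\<parallel>, A \<in> L+(D). It is metrizable iff it is generated by a
countable subfamily (every seminorm of the family is dominated by a multiple of a
finite maximum of the countable ones), and, being metrizable, it is complete iff
every Cauchy sequence converges.\<close>

definition graph_metrizable :: "'a::chilbert set \<Rightarrow> bool" where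
  "graph_metrizable D \<longleftrightarrow> (\<exists>S :: nat \<Rightarrow> ('a \<Rightarrow> 'a). (\<forall>n. S n \<in> Lplus D) \<and>
     (\<forall>A\<in>Lplus D. \<exists>C k. \<forall>\<phi>\<in>D. cnorm (A \<phi>) \<le> C * Max ((\<lambda>i. cnorm (S i \<phi>)) ` {..k})))"

definition graph_complete :: "'a::chilbert set \<Rightarrow> bool" where
  "graph_complete D \<longleftrightarrow> (\<forall>X :: nat \<Rightarrow> 'a. (\<forall>n. X n \<in> D) \<longrightarrow>
     (\<forall>A\<in>Lplus D. \<forall>e>0. \<exists>N. \<forall>m\<ge>N. \<forall>n\<ge>N. cnorm (A (X m - X n)) < e) \<longrightarrow>
     (\<exists>\<phi>\<in>D. \<forall>A\<in>Lplus D. \<forall>e>0. \<exists>N. \<forall>n\<ge>N. cnorm (A (X n - \<phi>)) < e))"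

definition F_domain :: "'a::chilbert set \<Rightarrow> bool" where
  "F_domain D \<longleftrightarrow> dense_subspace D \<and> graph_metrizable D \<and> graph_complete D"

definition finite_rank :: "'a::chilbert set \<Rightarrow> ('a \<Rightarrow> 'a) \<Rightarrow> bool" where
  "finite_rank D A \<longleftrightarrow> (\<exists>S. finite S \<and> (\<forall>x\<in>D. \<exists>c. A x = (\<Sum>s\<in>S. c s *\<^sub>C s)))"

definition rank_one :: "'a::chilbert set \<Rightarrow> ('a \<Rightarrow> 'a) \<Rightarrow> bool" where
  "rank_one D A \<longleftrightarrow> (\<exists>x\<in>D. A x \<noteq> 0) \<and> (\<exists>u. \<forall>x\<in>D. \<exists>c. A x = c *\<^sub>C u)"

definition Fin :: "'a::chilbert set \<Rightarrow> ('a \<Rightarrow> 'a) set" where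
  "Fin D = {A \<in> Lplus D. finite_rank D A}"

definition subalgebra :: "'a::chilbert set \<Rightarrow> ('a \<Rightarrow> 'a) set \<Rightarrow> bool" where
  "subalgebra D \<A> \<longleftrightarrow> \<A> \<subseteq> Lplus D \<and> zero_op \<in> \<A>
     \<and> (\<forall>A\<in>\<A>. \<forall>B\<in>\<A>. add_op A B \<in> \<A> \<and> A \<circ> B \<in> \<A>) \<and> (\<forall>c. \<forall>A\<in>\<A>. smult_op c A \<in> \<A>)"

definition star_closed :: "'a::chilbert set \<Rightarrow> ('a \<Rightarrow> 'a) set \<Rightarrow> bool" where
  "star_closed D \<A> \<longleftrightarrow> (\<forall>A\<in>\<A>. ladj D A \<in> \<A>)"

definition unital_standard_star_algebra :: "'a::chilbert set \<Rightarrow> ('a \<Rightarrow> 'a) set \<Rightarrow> bool" where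
  "unital_standard_star_algebra D \<A> \<longleftrightarrow> subalgebra D \<A> \<and> star_closed D \<A>
     \<and> Fin D \<subseteq> \<A> \<and> id_op D \<in> \<A>"

definition star_ideal :: "'a::chilbert set \<Rightarrow> ('a \<Rightarrow> 'a) set \<Rightarrow> bool" where
  "star_ideal D \<A> \<longleftrightarrow> \<A> \<subseteq> Lplus D \<and> zero_op \<in> \<A>
     \<and> (\<forall>A\<in>\<A>. \<forall>B\<in>\<A>. add_op A B \<in> \<A>) \<and> (\<forall>c. \<forall>A\<in>\<A>. smult_op c A \<in> \<A>)
     \<and> (\<forall>X\<in>Lplus D. \<forall>A\<in>\<A>. X \<circ> A \<in> \<A> \<and> A \<circ> X \<in> \<A>) \<and> star_closed D \<A>"

end

(*
  For operators in L+(D) the condition A^+ B = A B^+ = 0 says that the ranges of A and B are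
  orthogonal and so are the ranges of A^+ and B^+; write A \<bottom> B. Within the algebra, the
  rank one operators are exactly the nonzero A whose orthogonal complement {C. A \<bottom> C} is
  maximal among the complements of nonzero operators. Indeed, if A = u \<otimes> v (x \<mapsto> <x, v> u)
  and the complement of B contains that of A, then B is orthogonal to every w \<otimes> z with
  w \<bottom> u and z \<bottom> v, which forces B = u \<otimes> (c v); conversely, for a nonzero A and u = A x,
  the complement of A is contained in that of u \<otimes> A^+ u, and maximality makes A of that form.
  A bijection preserving \<bottom> preserves complements and their inclusions, hence preserves rank
  one operators, and so does its inverse. A finite rank operator is a finite sum of rank one
  operators (peel off the compression to a line of its range and induct on the size of a
  spanning set), so additivity carries finite rank across in both directions.
*)

theory Submission
  imports Defs "HOL-Library.Function_Algebras"
begin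

section \<open>Inner products and projections\<close>

interpretation cvs: vector_space "scaleC :: complex \<Rightarrow> 'a::chilbert \<Rightarrow> 'a"
  by unfold_locales (auto simp: scaleC_add_right scaleC_add_left scaleC_scaleC scaleC_one)

lemma cinner_add_right: "cinner x (y + z) = cinner x y + cinner x z"
  by (subst (1 2 3) cinner_commute) (simp add: cinner_add_left)

lemma cinner_scaleC_right: "cinner x (a *\<^sub>C y) = cnj a * cinner x y"
  by (subst (1 2) cinner_commute) (simp add: cinner_scaleC_left)

lemma cinner_zero_left [simp]: "cinner 0 y = 0"
  using cinner_scaleC_left [of 0 0 y] by simp

lemma cinner_zero_right [simp]: "cinner y 0 = 0"
  by (subst cinner_commute) simp

lemma cinner_minus_left: "cinner (- x) y = - cinner x y"
  using cinner_scaleC_left [of "-1" x y] by (simp add: cvs.scale_minus_left)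

lemma cinner_minus_right: "cinner y (- x) = - cinner y x"
  using cinner_scaleC_right [of y "-1" x] by (simp add: cvs.scale_minus_left)

lemma cinner_diff_left: "cinner (x - z) y = cinner x y - cinner z y"
  using cinner_add_left [of x "- z" y] by (simp add: cinner_minus_left)

lemma cinner_diff_right: "cinner y (x - z) = cinner y x - cinner y z"
  using cinner_add_right [of y x "- z"] by (simp add: cinner_minus_right)

lemma cinner_self_eq_0 [simp]: "cinner x x = 0 \<longleftrightarrow> x = 0"
  using cinner_eq_zero by auto

lemma cnj_cinner_self [simp]: "cnj (cinner x x) = cinner x x"
  using cinner_commute [of x x] by simp

lemma zero_op_eq_0: "zero_op = 0"
  by (simp add: zero_op_def fun_eq_iff)

lemma add_op_eq_plus: "add_op A B = A + B"
  by (simp add: add_op_def fun_eq_iff)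

definition proj_perp :: "'a::chilbert \<Rightarrow> 'a \<Rightarrow> 'a" where
  "proj_perp u y = y - (cinner y u / cinner u u) *\<^sub>C u"

lemma cinner_proj_perp_left: "u \<noteq> 0 \<Longrightarrow> cinner (proj_perp u y) u = 0"
  by (simp add: proj_perp_def cinner_diff_left cinner_scaleC_left)

lemma proj_perp_self: "u \<noteq> 0 \<Longrightarrow> proj_perp u u = 0"
  by (simp add: proj_perp_def)

lemma module_hom_proj_perp: "module_hom scaleC scaleC (proj_perp u)"
  unfolding module_hom_iff proj_perp_def
  by (simp add: cvs.module_axioms cinner_add_left cinner_scaleC_left add_divide_distrib
      cvs.scale_left_distrib cvs.scale_right_diff_distrib)

lemma proj_perp_span_smaller:
  assumes S: "finite S" and u: "u \<in> cvs.span S" "u \<noteq> 0"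
  obtains S' where "finite S'" "card S' < card S" "proj_perp u ` cvs.span S \<subseteq> cvs.span S'"
proof -
  interpret P: module_hom scaleC scaleC "proj_perp u" by (rule module_hom_proj_perp)
  obtain c where c: "u = (\<Sum>s\<in>S. c s *\<^sub>C s)" using u(1) cvs.span_finite [OF S] by blast
  have "\<exists>s0\<in>S. c s0 \<noteq> 0"
  proof (rule ccontr)
    assume "\<not> (\<exists>s0\<in>S. c s0 \<noteq> 0)"
    then have "u = 0" unfolding c by (intro sum.neutral) simp
    with u(2) show False by contradiction
  qed
  then obtain s0 where s0: "s0 \<in> S" "c s0 \<noteq> 0" by blast
  define S' where "S' = proj_perp u ` (S - {s0})"
  have "proj_perp u (\<Sum>s\<in>S. c s *\<^sub>C s) = (\<Sum>s\<in>S. c s *\<^sub>C proj_perp u s)"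
    by (simp only: P.sum P.scale)
  then have "0 = (\<Sum>s\<in>S. c s *\<^sub>C proj_perp u s)"
    unfolding c [symmetric] proj_perp_self [OF u(2)] .
  also have "\<dots> = c s0 *\<^sub>C proj_perp u s0 + (\<Sum>s\<in>S - {s0}. c s *\<^sub>C proj_perp u s)"
    by (rule sum.remove [OF S s0(1)])
  finally have "c s0 *\<^sub>C proj_perp u s0 = - (\<Sum>s\<in>S - {s0}. c s *\<^sub>C proj_perp u s)"
    by (metis eq_neg_iff_add_eq_0)
  also have "\<dots> \<in> cvs.span S'"
    unfolding S'_def by (intro cvs.span_neg cvs.span_sum cvs.span_scale cvs.span_base) auto
  finally have "(1 / c s0) *\<^sub>C (c s0 *\<^sub>C proj_perp u s0) \<in> cvs.span S'"
    by (rule cvs.span_scale)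
  with s0(2) have "proj_perp u s0 \<in> cvs.span S'" by (simp add: scaleC_scaleC scaleC_one)
  then have "proj_perp u ` S \<subseteq> cvs.span S'"
    by (auto simp: S'_def intro: cvs.span_base)
  then have "cvs.span (proj_perp u ` S) \<subseteq> cvs.span S'"
    by (rule cvs.span_minimal [OF _ cvs.subspace_span])
  then have "proj_perp u ` cvs.span S \<subseteq> cvs.span S'"
    by (simp only: P.span_image)
  moreover have "card S' < card S"
  proof -
    have "card S' \<le> card (S - {s0})" unfolding S'_def using S by (simp add: card_image_le)
    also have "\<dots> < card S" using S s0(1) by (rule card_Diff1_less)
    finally show ?thesis .
  qed
  moreover have "finite S'" unfolding S'_def using S by simp
  ultimately show ?thesis by (intro that)
qed

section \<open>The subspace \<open>D\<close> and operators on it\<close>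

locale csubspace =
  fixes D :: "'a::chilbert set"
  assumes zero_mem: "0 \<in> D"
    and add_mem: "x \<in> D \<Longrightarrow> y \<in> D \<Longrightarrow> x + y \<in> D"
    and scaleC_mem: "x \<in> D \<Longrightarrow> c *\<^sub>C x \<in> D"
begin

lemma diff_mem: "x \<in> D \<Longrightarrow> y \<in> D \<Longrightarrow> x - y \<in> D"
  using add_mem [OF _ scaleC_mem [of y "- 1"]] by (simp add: cvs.scale_minus_left)

lemma proj_perp_mem: "u \<in> D \<Longrightarrow> y \<in> D \<Longrightarrow> proj_perp u y \<in> D"
  unfolding proj_perp_def by (simp add: diff_mem scaleC_mem)

lemma ext_cinner:
  assumes "p \<in> D" "q \<in> D" "\<And>x. x \<in> D \<Longrightarrow> cinner x p = cinner x q"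
  shows "p = q"
proof -
  have "cinner (p - q) (p - q) = 0"
    using assms diff_mem by (simp add: cinner_diff_right)
  then show ?thesis by simp
qed

lemma eq_scaleC_if_orth_compl:
  assumes u: "u \<in> D" "u \<noteq> 0" and y: "y \<in> D"
    and orth: "\<And>w. w \<in> D \<Longrightarrow> cinner w u = 0 \<Longrightarrow> cinner y w = 0"
  shows "y = (cinner y u / cinner u u) *\<^sub>C u"
proof -
  define w where "w = proj_perp u y"
  have w: "w \<in> D" "cinner w u = 0"
    unfolding w_def using proj_perp_mem cinner_proj_perp_left u y by auto
  then have "cinner u w = 0" by (metis cinner_commute complex_cnj_zero)
  have "cinner (proj_perp u y) w = cinner y w - (cinner y u / cinner u u) * cinner u w"
    by (simp add: proj_perp_def cinner_diff_left cinner_scaleC_left)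
  then have "cinner w w = 0"
    using orth [OF w] \<open>cinner u w = 0\<close> by (simp add: w_def)
  then show ?thesis by (simp add: w_def proj_perp_def)
qed

text \<open>If no nonzero vector of \<open>D\<close> is orthogonal to \<open>v\<close>, then \<open>D\<close> is the line through \<open>v\<close>,
  which contains both \<open>y\<close> and \<open>u\<close>.\<close>
lemma eq_scaleC_if_orth_dyads:
  assumes u: "u \<in> D" "u \<noteq> 0" and v: "v \<in> D" "v \<noteq> 0" and y: "y \<in> D"
    and orth: "\<And>w z. w \<in> D \<Longrightarrow> w \<noteq> 0 \<Longrightarrow> cinner w u = 0 \<Longrightarrow> z \<in> D \<Longrightarrow> z \<noteq> 0 \<Longrightarrow>
      cinner z v = 0 \<Longrightarrow> cinner y w = 0"
  shows "\<exists>c. y = c *\<^sub>C u"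
proof (cases "\<exists>z\<in>D. z \<noteq> 0 \<and> cinner z v = 0")
  case True
  then have "y = (cinner y u / cinner u u) *\<^sub>C u"
    using eq_scaleC_if_orth_compl [OF u y] orth by (metis cinner_zero_right)
  then show ?thesis by blast
next
  case False
  then have line: "x = (cinner x v / cinner v v) *\<^sub>C v" if "x \<in> D" for x
    using False by (intro eq_scaleC_if_orth_compl [OF v that]) auto
  define a where "a = cinner u v / cinner v v"
  have a: "u = a *\<^sub>C v" and "a \<noteq> 0"
    using line [OF u(1)] u(2) unfolding a_def by auto
  have "y = (cinner y v / cinner v v / a) *\<^sub>C u"
    using line [OF y] \<open>a \<noteq> 0\<close> by (subst a) (simp add: scaleC_scaleC)
  then show ?thesis by blast
qed

lemma op_zero: "is_op_on D A \<Longrightarrow> A 0 = 0"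
  unfolding is_op_on_def using zero_mem by (metis add_cancel_right_right add_0)

lemma op_mem: "is_op_on D A \<Longrightarrow> x \<in> D \<Longrightarrow> A x \<in> D"
  unfolding is_op_on_def by auto

lemma op_outside: "is_op_on D A \<Longrightarrow> x \<notin> D \<Longrightarrow> A x = 0"
  unfolding is_op_on_def by auto

lemma op_scaleC: "is_op_on D A \<Longrightarrow> x \<in> D \<Longrightarrow> A (c *\<^sub>C x) = c *\<^sub>C A x"
  unfolding is_op_on_def by auto

lemma op_neq_0_iff: "is_op_on D A \<Longrightarrow> A \<noteq> 0 \<longleftrightarrow> (\<exists>x\<in>D. A x \<noteq> 0)"
  by (metis ext op_outside zero_fun_apply)

lemma adj_unique:
  assumes "is_adj_on D A B" "is_adj_on D A B'"
  shows "B = B'"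
proof
  fix y
  show "B y = B' y"
  proof (cases "y \<in> D")
    case True
    with assms show ?thesis
      unfolding is_adj_on_def by (metis ext_cinner)
  next
    case False
    with assms show ?thesis unfolding is_adj_on_def by auto
  qed
qed

lemma ladj_eqI: "is_adj_on D A B \<Longrightarrow> ladj D A = B"
  unfolding ladj_def using adj_unique by blast

lemma Lplus_is_op_on: "A \<in> Lplus D \<Longrightarrow> is_op_on D A"
  unfolding Lplus_def by auto

lemma is_adj_on_ladj: "A \<in> Lplus D \<Longrightarrow> is_adj_on D A (ladj D A)"
  unfolding Lplus_def using ladj_eqI by auto

lemma ladj_mem: "A \<in> Lplus D \<Longrightarrow> x \<in> D \<Longrightarrow> ladj D A x \<in> D"
  using is_adj_on_ladj unfolding is_adj_on_def by blast

lemma ladj_outside: "A \<in> Lplus D \<Longrightarrow> x \<notin> D \<Longrightarrow> ladj D A x = 0"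
  using is_adj_on_ladj unfolding is_adj_on_def by blast

lemma cinner_ladj_right:
  "A \<in> Lplus D \<Longrightarrow> x \<in> D \<Longrightarrow> y \<in> D \<Longrightarrow> cinner x (ladj D A y) = cinner (A x) y"
  using is_adj_on_ladj unfolding is_adj_on_def by auto

lemma cinner_ladj_left:
  "A \<in> Lplus D \<Longrightarrow> x \<in> D \<Longrightarrow> y \<in> D \<Longrightarrow> cinner (ladj D A x) y = cinner x (A y)"
  by (metis cinner_commute cinner_ladj_right)

lemma ladj_is_op_on:
  assumes A: "A \<in> Lplus D"
  shows "is_op_on D (ladj D A)"
  unfolding is_op_on_def
proof (intro conjI allI ballI impI)
  fix x y c
  assume x: "x \<in> D"
  with A show "ladj D A x \<in> D" by (rule ladj_mem)
  show "ladj D A (c *\<^sub>C x) = c *\<^sub>C ladj D A x"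
    using A x by (intro ext_cinner)
      (simp_all add: scaleC_mem ladj_mem cinner_ladj_right cinner_scaleC_right op_mem Lplus_is_op_on)
  assume y: "y \<in> D"
  show "ladj D A (x + y) = ladj D A x + ladj D A y"
    using A x y by (intro ext_cinner)
      (simp_all add: add_mem ladj_mem cinner_ladj_right cinner_add_right op_mem Lplus_is_op_on)
qed (use A ladj_outside in blast)

lemma ladj_Lplus: "A \<in> Lplus D \<Longrightarrow> ladj D A \<in> Lplus D"
  and ladj_ladj: "A \<in> Lplus D \<Longrightarrow> ladj D (ladj D A) = A"
proof -
  assume A: "A \<in> Lplus D"
  then have "is_adj_on D (ladj D A) A"
    unfolding is_adj_on_def by (auto simp: op_outside op_mem Lplus_is_op_on cinner_ladj_left)
  then show "ladj D A \<in> Lplus D" "ladj D (ladj D A) = A"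
    using ladj_is_op_on [OF A] unfolding Lplus_def by (auto intro: ladj_eqI)
qed

lemma Lplus_zero: "0 \<in> Lplus D"
  unfolding Lplus_def is_op_on_def is_adj_on_def by (auto simp: zero_mem intro!: exI [of _ 0])

lemma Lplus_add:
  assumes A: "A \<in> Lplus D" and B: "B \<in> Lplus D"
  shows "A + B \<in> Lplus D"
proof -
  have "is_op_on D (A + B)"
    using A B unfolding is_op_on_def Lplus_def by (auto simp: add_mem cvs.scale_right_distrib)
  moreover have "is_adj_on D (A + B) (ladj D A + ladj D B)"
    using A B unfolding is_adj_on_def
    by (auto simp: ladj_outside ladj_mem add_mem cinner_add_left cinner_add_right cinner_ladj_right)
  ultimately show ?thesis unfolding Lplus_def by blast
qed

lemma Lplus_uminus:
  assumes A: "A \<in> Lplus D"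
  shows "- A \<in> Lplus D"
proof -
  have "is_op_on D (- A)"
    using A unfolding is_op_on_def Lplus_def
    by (auto simp: cvs.scale_right_distrib cvs.scale_minus_right)
      (metis diff_0 diff_mem zero_mem)
  moreover have "is_adj_on D (- A) (- ladj D A)"
    using A unfolding is_adj_on_def
    by (auto simp: ladj_outside ladj_mem cinner_minus_left cinner_minus_right cinner_ladj_right)
      (metis diff_0 diff_mem ladj_mem zero_mem)
  ultimately show ?thesis unfolding Lplus_def by blast
qed

lemma Lplus_diff: "A \<in> Lplus D \<Longrightarrow> B \<in> Lplus D \<Longrightarrow> A - B \<in> Lplus D"
  using Lplus_add Lplus_uminus by (metis diff_conv_add_uminus)

lemma ladj_comp_eq_0_iff:
  assumes A: "A \<in> Lplus D" and B: "is_op_on D B"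
  shows "ladj D A \<circ> B = 0 \<longleftrightarrow> (\<forall>x\<in>D. \<forall>y\<in>D. cinner (A x) (B y) = 0)"
proof
  assume "ladj D A \<circ> B = 0"
  then show "\<forall>x\<in>D. \<forall>y\<in>D. cinner (A x) (B y) = 0"
    using A B by (metis comp_apply zero_fun_apply cinner_ladj_right cinner_zero_right op_mem)
next
  assume orth: "\<forall>x\<in>D. \<forall>y\<in>D. cinner (A x) (B y) = 0"
  show "ladj D A \<circ> B = 0"
  proof
    fix y
    show "(ladj D A \<circ> B) y = 0 y"
    proof (cases "y \<in> D")
      case True
      with A B orth show ?thesis
        by (auto intro!: ext_cinner simp: op_mem ladj_mem zero_mem cinner_ladj_right)
    next
      case False
      then show ?thesis using A B by (simp add: op_outside ladj_is_op_on op_zero)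
    qed
  qed
qed

lemma comp_ladj_eq_0_iff:
  assumes "A \<in> Lplus D" "B \<in> Lplus D"
  shows "A \<circ> ladj D B = 0 \<longleftrightarrow> (\<forall>x\<in>D. \<forall>y\<in>D. cinner (ladj D A x) (ladj D B y) = 0)"
  using ladj_comp_eq_0_iff [of "ladj D A" "ladj D B"] assms
  by (simp add: ladj_Lplus ladj_ladj ladj_is_op_on)

end

section \<open>Orthogonality and rank one operators\<close>

definition orth :: "'a::chilbert set \<Rightarrow> ('a \<Rightarrow> 'a) \<Rightarrow> ('a \<Rightarrow> 'a) \<Rightarrow> bool" where
  "orth D A B \<longleftrightarrow> (\<forall>x\<in>D. \<forall>y\<in>D. cinner (A x) (B y) = 0)
     \<and> (\<forall>x\<in>D. \<forall>y\<in>D. cinner (ladj D A x) (ladj D B y) = 0)"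

lemma orth_sym: "orth D A B \<Longrightarrow> orth D B A"
  unfolding orth_def by (metis cinner_commute complex_cnj_zero)

definition dyad :: "'a::chilbert set \<Rightarrow> 'a \<Rightarrow> 'a \<Rightarrow> 'a \<Rightarrow> 'a" where
  "dyad D a b = (\<lambda>x. if x \<in> D then cinner x b *\<^sub>C a else 0)"

lemma dyad_apply [simp]: "x \<in> D \<Longrightarrow> dyad D a b x = cinner x b *\<^sub>C a"
  by (simp add: dyad_def)

lemma dyad_zero_left [simp]: "dyad D 0 b = 0"
  by (simp add: dyad_def fun_eq_iff)

lemma dyad_zero_right [simp]: "dyad D a 0 = 0"
  by (simp add: dyad_def fun_eq_iff)

context csubspace
begin

lemma orth_iff_comp_ladj:
  "A \<in> Lplus D \<Longrightarrow> B \<in> Lplus D \<Longrightarrow>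
    orth D A B \<longleftrightarrow> ladj D A \<circ> B = 0 \<and> A \<circ> ladj D B = 0"
  unfolding orth_def by (simp add: ladj_comp_eq_0_iff comp_ladj_eq_0_iff Lplus_is_op_on)

lemma is_adj_on_dyad:
  assumes "a \<in> D" "b \<in> D"
  shows "is_adj_on D (dyad D a b) (dyad D b a)"
proof -
  have "cinner (cinner x b *\<^sub>C a) y = cinner x (cinner y a *\<^sub>C b)" for x y
    by (simp add: cinner_scaleC_left cinner_scaleC_right cinner_commute [of y a])
  then show "is_adj_on D (dyad D a b) (dyad D b a)"
    unfolding is_adj_on_def using assms by (simp add: dyad_def scaleC_mem)
qed

lemma dyad_Lplus: "a \<in> D \<Longrightarrow> b \<in> D \<Longrightarrow> dyad D a b \<in> Lplus D"
  unfolding Lplus_def is_op_on_def using is_adj_on_dyad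
  by (auto simp: dyad_def add_mem scaleC_mem cinner_add_left cinner_scaleC_left cvs.scale_left_distrib)

lemma ladj_dyad: "a \<in> D \<Longrightarrow> b \<in> D \<Longrightarrow> ladj D (dyad D a b) = dyad D b a"
  using is_adj_on_dyad by (rule ladj_eqI)

lemma comp_dyad: "is_op_on D A \<Longrightarrow> c \<in> D \<Longrightarrow> A \<circ> dyad D c d = dyad D (A c) d"
  by (auto simp: fun_eq_iff dyad_def op_scaleC op_zero)

lemma dyad_comp_dyad: "c \<in> D \<Longrightarrow> dyad D a b \<circ> dyad D c d = dyad D (cinner c b *\<^sub>C a) d"
  by (auto simp: fun_eq_iff dyad_def scaleC_mem cinner_scaleC_left scaleC_scaleC)

lemma rank_one_dyad: "a \<in> D \<Longrightarrow> a \<noteq> 0 \<Longrightarrow> b \<in> D \<Longrightarrow> b \<noteq> 0 \<Longrightarrow> rank_one D (dyad D a b)"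
proof -
  assume "a \<in> D" "a \<noteq> 0" "b \<in> D" "b \<noteq> 0"
  then have "dyad D a b b \<noteq> 0" by (simp add: cvs.scale_eq_0_iff)
  moreover have "\<forall>x\<in>D. \<exists>c. dyad D a b x = c *\<^sub>C a" by simp
  ultimately show ?thesis unfolding rank_one_def using \<open>b \<in> D\<close> by blast
qed

lemma dyad_neq_0: "a \<noteq> 0 \<Longrightarrow> b \<in> D \<Longrightarrow> b \<noteq> 0 \<Longrightarrow> dyad D a b \<noteq> 0"
  by (metis cvs.scale_eq_0_iff cinner_self_eq_0 dyad_apply zero_fun_apply)

lemma dyad_eq_0_or_rank_one: "a \<in> D \<Longrightarrow> b \<in> D \<Longrightarrow> dyad D a b = 0 \<or> rank_one D (dyad D a b)"
  using rank_one_dyad by (cases "a = 0 \<or> b = 0") auto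

text \<open>This dyad is the compression \<open>x \<mapsto> P A x\<close> of \<open>A\<close>, \<open>P\<close> the orthogonal projection
  onto the line through \<open>u\<close>.\<close>
lemma dyad_ladj_apply:
  assumes "A \<in> Lplus D" "u \<in> D" "x \<in> D"
  shows "dyad D u ((1 / cinner u u) *\<^sub>C ladj D A u) x = (cinner (A x) u / cinner u u) *\<^sub>C u"
  using assms by (simp add: cinner_scaleC_right cinner_ladj_right)

lemma eq_dyad_if_range_in_line:
  assumes A: "A \<in> Lplus D" and u: "u \<in> D" "u \<noteq> 0"
    and line: "\<And>x. x \<in> D \<Longrightarrow> \<exists>c. A x = c *\<^sub>C u"
  shows "A = dyad D u ((1 / cinner u u) *\<^sub>C ladj D A u)"
proof
  fix x
  show "A x = dyad D u ((1 / cinner u u) *\<^sub>C ladj D A u) x"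
  proof (cases "x \<in> D")
    case True
    then obtain c where "A x = c *\<^sub>C u" using line by blast
    with u show ?thesis by (simp add: dyad_ladj_apply [OF A u(1) True] cinner_scaleC_left)
  next
    case False
    then show ?thesis using A by (simp add: dyad_def op_outside Lplus_is_op_on)
  qed
qed

lemma rank_one_iff_dyad:
  assumes A: "A \<in> Lplus D"
  shows "rank_one D A \<longleftrightarrow> (\<exists>u\<in>D. \<exists>v\<in>D. u \<noteq> 0 \<and> v \<noteq> 0 \<and> A = dyad D u v)"
proof
  assume "rank_one D A"
  then obtain x0 u0 where x0: "x0 \<in> D" "A x0 \<noteq> 0" and u0: "\<forall>x\<in>D. \<exists>c. A x = c *\<^sub>C u0"
    unfolding rank_one_def by blast
  define u where "u = A x0"
  have u: "u \<in> D" "u \<noteq> 0"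
    unfolding u_def using x0 A by (auto simp: op_mem Lplus_is_op_on)
  have "\<exists>c. A x = c *\<^sub>C u" if "x \<in> D" for x
  proof -
    obtain a b where "A x = a *\<^sub>C u0" "u = b *\<^sub>C u0"
      using u0 x0(1) \<open>x \<in> D\<close> unfolding u_def by blast
    with u(2) have "A x = (a / b) *\<^sub>C u" by (auto simp: scaleC_scaleC)
    then show ?thesis by blast
  qed
  then have A_eq: "A = dyad D u ((1 / cinner u u) *\<^sub>C ladj D A u)"
    using eq_dyad_if_range_in_line [OF A u] by blast
  moreover have "(1 / cinner u u) *\<^sub>C ladj D A u \<noteq> 0"
    using A_eq x0(2) by (metis dyad_zero_right zero_fun_apply)
  ultimately show "\<exists>u\<in>D. \<exists>v\<in>D. u \<noteq> 0 \<and> v \<noteq> 0 \<and> A = dyad D u v"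
    using u A by (meson ladj_mem scaleC_mem)
qed (auto intro: rank_one_dyad)

lemma orth_dyad_iff:
  assumes C: "C \<in> Lplus D" and u: "u \<in> D" "u \<noteq> 0" and v: "v \<in> D" "v \<noteq> 0"
  shows "orth D C (dyad D u v) \<longleftrightarrow> (\<forall>y\<in>D. cinner (C y) u = 0 \<and> cinner (ladj D C y) v = 0)"
proof -
  have "orth D C (dyad D u v) \<longleftrightarrow>
      (\<forall>x\<in>D. \<forall>y\<in>D. cnj (cinner y v) * cinner (C x) u = 0 \<and>
        cnj (cinner y u) * cinner (ladj D C x) v = 0)"
    unfolding orth_def using u v by (auto simp: ladj_dyad cinner_scaleC_right)
  also have "\<dots> \<longleftrightarrow> (\<forall>y\<in>D. cinner (C y) u = 0 \<and> cinner (ladj D C y) v = 0)"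
    using u v by (metis cinner_self_eq_0 cnj_cinner_self mult_eq_0_iff mult_zero_right)
  finally show ?thesis .
qed

lemma orth_dyad_scaleC_iff:
  assumes "C \<in> Lplus D" "u \<in> D" "u \<noteq> 0" "v \<in> D" "v \<noteq> 0" "c \<noteq> 0"
  shows "orth D C (dyad D u (c *\<^sub>C v)) \<longleftrightarrow> orth D C (dyad D u v)"
  using assms by (simp add: orth_dyad_iff scaleC_mem cvs.scale_eq_0_iff cinner_scaleC_right)

lemma eq_dyad_if_orth_dyads:
  assumes B: "B \<in> Lplus D" and u: "u \<in> D" "u \<noteq> 0" and v: "v \<in> D" "v \<noteq> 0"
    and orth: "\<And>w z. w \<in> D \<Longrightarrow> w \<noteq> 0 \<Longrightarrow> cinner w u = 0 \<Longrightarrow> z \<in> D \<Longrightarrow> z \<noteq> 0 \<Longrightarrow>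
      cinner z v = 0 \<Longrightarrow> orth D B (dyad D w z)"
  shows "\<exists>c. B = dyad D u (c *\<^sub>C v)"
proof -
  have "\<exists>c. B x = c *\<^sub>C u" if "x \<in> D" for x
    using B that orth
    by (intro eq_scaleC_if_orth_dyads [OF u v]) (auto simp: op_mem Lplus_is_op_on orth_dyad_iff)
  then have B_eq: "B = dyad D u ((1 / cinner u u) *\<^sub>C ladj D B u)"
    by (rule eq_dyad_if_range_in_line [OF B u])
  have "\<exists>c. ladj D B u = c *\<^sub>C v"
    using B u(1) orth by (intro eq_scaleC_if_orth_dyads [OF v u]) (auto simp: ladj_mem orth_dyad_iff)
  then obtain c where "ladj D B u = c *\<^sub>C v" by blast
  with B_eq have "B = dyad D u ((1 / cinner u u * c) *\<^sub>C v)" by (simp add: scaleC_scaleC)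
  then show ?thesis by blast
qed

end

section \<open>Finite rank operators\<close>

lemma finite_rank_iff_span:
  "finite_rank D A \<longleftrightarrow> (\<exists>S. finite S \<and> (\<forall>x\<in>D. A x \<in> cvs.span S))"
proof -
  have "(\<forall>x\<in>D. \<exists>c. A x = (\<Sum>s\<in>S. c s *\<^sub>C s)) \<longleftrightarrow> (\<forall>x\<in>D. A x \<in> cvs.span S)"
    if "finite S" for S
    using cvs.span_finite [OF that] by auto
  then show ?thesis unfolding finite_rank_def by blast
qed

lemma finite_rank_zero: "finite_rank D 0"
  unfolding finite_rank_iff_span by (auto intro: cvs.span_zero)

lemma finite_rank_add:
  assumes "finite_rank D A" "finite_rank D B"
  shows "finite_rank D (A + B)"
proof -
  obtain S T where "finite S" "\<forall>x\<in>D. A x \<in> cvs.span S" "finite T" "\<forall>x\<in>D. B x \<in> cvs.span T"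
    using assms unfolding finite_rank_iff_span by blast
  then have "finite (S \<union> T)" "\<forall>x\<in>D. (A + B) x \<in> cvs.span (S \<union> T)"
    by (auto intro!: cvs.span_add elim: set_mp [OF cvs.span_mono, rotated])
  then show ?thesis unfolding finite_rank_iff_span by blast
qed

lemma finite_rank_if_rank_one: "rank_one D A \<Longrightarrow> finite_rank D A"
  unfolding rank_one_def finite_rank_iff_span
  by (metis cvs.span_base cvs.span_scale finite.emptyI finite.insertI insertI1)

context csubspace
begin

lemma dyad_Fin:
  assumes "a \<in> D" "b \<in> D"
  shows "dyad D a b \<in> Fin D"
  using dyad_eq_0_or_rank_one [OF assms] dyad_Lplus [OF assms] unfolding Fin_def
  by (auto simp: finite_rank_zero finite_rank_if_rank_one)

lemma sum_dyads_if_range_in_span: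
  assumes "F \<in> Lplus D" "finite S" "\<forall>x\<in>D. F x \<in> cvs.span S"
  shows "\<exists>ps. set ps \<subseteq> D \<times> D \<and> F = (\<Sum>(a, b)\<leftarrow>ps. dyad D a b)"
  using assms
proof (induction "card S" arbitrary: F S rule: less_induct)
  case less
  show ?case
  proof (cases "F = 0")
    case True
    then show ?thesis by (intro exI [of _ "[]"]) simp
  next
    case False
    then obtain x0 where x0: "x0 \<in> D" "F x0 \<noteq> 0"
      using less.prems(1) by (auto simp: op_neq_0_iff Lplus_is_op_on)
    define u where "u = F x0"
    define w where "w = (1 / cinner u u) *\<^sub>C ladj D F u"
    have u: "u \<in> D" "u \<noteq> 0" "u \<in> cvs.span S"
      unfolding u_def using x0 less.prems by (auto simp: op_mem Lplus_is_op_on)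
    have w: "w \<in> D" unfolding w_def using less.prems(1) u(1) by (simp add: ladj_mem scaleC_mem)
    txt \<open>Removing the compression of \<open>F\<close> to the line through \<open>u\<close> leaves an operator
      whose range lies in a span of fewer vectors.\<close>
    obtain S' where S': "finite S'" "card S' < card S" "proj_perp u ` cvs.span S \<subseteq> cvs.span S'"
      using proj_perp_span_smaller [OF less.prems(2) u(3,2)] by blast
    have "(F - dyad D u w) x = proj_perp u (F x)" if "x \<in> D" for x
      using less.prems(1) u(1) that by (simp add: w_def dyad_ladj_apply proj_perp_def del: dyad_apply)
    then have "\<forall>x\<in>D. (F - dyad D u w) x \<in> cvs.span S'"
      using S'(3) less.prems(3) by auto
    moreover have "F - dyad D u w \<in> Lplus D"
      using less.prems(1) u(1) w by (simp add: Lplus_diff dyad_Lplus)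
    ultimately obtain ps where "set ps \<subseteq> D \<times> D" "F - dyad D u w = (\<Sum>(a, b)\<leftarrow>ps. dyad D a b)"
      using less.hyps [OF S'(2)] S'(1) by blast
    then have "set ((u, w) # ps) \<subseteq> D \<times> D" "F = (\<Sum>(a, b)\<leftarrow>(u, w) # ps. dyad D a b)"
      using u(1) w by (auto simp: algebra_simps)
    then show ?thesis by blast
  qed
qed

lemma Fin_eq_sum_dyads:
  "F \<in> Fin D \<Longrightarrow> \<exists>ps. set ps \<subseteq> D \<times> D \<and> F = (\<Sum>(a, b)\<leftarrow>ps. dyad D a b)"
  unfolding Fin_def finite_rank_iff_span using sum_dyads_if_range_in_span by blast

lemma Fin_add: "A \<in> Fin D \<Longrightarrow> B \<in> Fin D \<Longrightarrow> A + B \<in> Fin D"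
  unfolding Fin_def by (simp add: Lplus_add finite_rank_add)

lemma star_ideal_dyad:
  assumes I: "star_ideal D \<A>" and A: "A \<in> \<A>" "A \<noteq> 0" and ab: "a \<in> D" "b \<in> D"
  shows "dyad D a b \<in> \<A>"
proof -
  have AL: "\<A> \<subseteq> Lplus D" and comp: "\<And>X A. X \<in> Lplus D \<Longrightarrow> A \<in> \<A> \<Longrightarrow> X \<circ> A \<in> \<A> \<and> A \<circ> X \<in> \<A>"
    using I unfolding star_ideal_def by auto
  have A_op: "is_op_on D A" using A AL by (auto simp: Lplus_is_op_on)
  obtain x0 where x0: "x0 \<in> D" "A x0 \<noteq> 0"
    using A(2) A_op by (auto simp: op_neq_0_iff)
  define u where "u = A x0"
  have u: "u \<in> D" "u \<noteq> 0" unfolding u_def using x0 A_op by (auto simp: op_mem)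
  have "dyad D ((1 / cinner u u) *\<^sub>C a) u \<circ> (A \<circ> dyad D x0 b) \<in> \<A>"
    using comp A(1) x0(1) u(1) ab by (simp add: dyad_Lplus scaleC_mem)
  also have "dyad D ((1 / cinner u u) *\<^sub>C a) u \<circ> (A \<circ> dyad D x0 b) = dyad D a b"
    using x0(1) u by (simp add: comp_dyad [OF A_op] dyad_comp_dyad scaleC_scaleC u_def [symmetric])
  finally show ?thesis .
qed

end

section \<open>Rank one operators as maximal orthogonal complements\<close>

text \<open>The properties of \<open>F(D)\<close>, of unital standard \<open>*\<close>-algebras and of \<open>*\<close>-ideals that the
  argument needs; for an ideal, the rank one operators belong to it as soon as it is nonzero.\<close>
locale standard_family = csubspace D for D :: "'a::chilbert set" +
  fixes \<A> :: "('a \<Rightarrow> 'a) set"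
  assumes family_subset_Lplus: "\<A> \<subseteq> Lplus D"
    and zero_family: "0 \<in> \<A>"
    and add_family: "A \<in> \<A> \<Longrightarrow> B \<in> \<A> \<Longrightarrow> A + B \<in> \<A>"
    and dyad_family: "A \<in> \<A> \<Longrightarrow> A \<noteq> 0 \<Longrightarrow> a \<in> D \<Longrightarrow> b \<in> D \<Longrightarrow> dyad D a b \<in> \<A>"
begin

definition orth_compl :: "('a \<Rightarrow> 'a) \<Rightarrow> ('a \<Rightarrow> 'a) set" where
  "orth_compl A = {C \<in> \<A>. orth D A C}"

definition maximal_orth_compl :: "('a \<Rightarrow> 'a) \<Rightarrow> bool" where
  "maximal_orth_compl A \<longleftrightarrow> A \<noteq> 0 \<and>
     (\<forall>B\<in>\<A>. B \<noteq> 0 \<longrightarrow> orth_compl A \<subseteq> orth_compl B \<longrightarrow> orth_compl A = orth_compl B)"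

lemma family_Lplus: "A \<in> \<A> \<Longrightarrow> A \<in> Lplus D"
  using family_subset_Lplus by blast

lemma orth_dyad_dyad:
  assumes "u \<in> D" "u \<noteq> 0" "v \<in> D" "v \<noteq> 0" "w \<in> D" "w \<noteq> 0" "z \<in> D" "z \<noteq> 0"
    and "cinner w u = 0" "cinner z v = 0"
  shows "orth D (dyad D u v) (dyad D w z)"
  using assms
  by (simp add: orth_dyad_iff dyad_Lplus ladj_dyad cinner_scaleC_left
      cinner_commute [of u w] cinner_commute [of v z])

lemma maximal_orth_compl_dyad:
  assumes u: "u \<in> D" "u \<noteq> 0" and v: "v \<in> D" "v \<noteq> 0" and A: "dyad D u v \<in> \<A>"
  shows "maximal_orth_compl (dyad D u v)"
  unfolding maximal_orth_compl_def
proof (intro conjI ballI impI)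
  show nz: "dyad D u v \<noteq> 0" using u v by (simp add: dyad_neq_0)
  fix B
  assume B: "B \<in> \<A>" "B \<noteq> 0" and le: "orth_compl (dyad D u v) \<subseteq> orth_compl B"
  have "orth D B (dyad D w z)"
    if "w \<in> D" "w \<noteq> 0" "cinner w u = 0" "z \<in> D" "z \<noteq> 0" "cinner z v = 0" for w z
  proof -
    have "dyad D w z \<in> orth_compl (dyad D u v)"
      unfolding orth_compl_def using dyad_family [OF A nz that(1,4)]
        orth_dyad_dyad [OF u v that(1,2) that(4,5) that(3,6)] by blast
    with le show ?thesis unfolding orth_compl_def by blast
  qed
  then obtain c where c: "B = dyad D u (c *\<^sub>C v)"
    using eq_dyad_if_orth_dyads [OF family_Lplus [OF B(1)] u v] by blast
  with B(2) have "c \<noteq> 0" by auto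
  have "orth D (dyad D u (c *\<^sub>C v)) C \<longleftrightarrow> orth D (dyad D u v) C" if "C \<in> \<A>" for C
    using orth_dyad_scaleC_iff [OF family_Lplus [OF that] u v \<open>c \<noteq> 0\<close>] orth_sym by blast
  then show "orth_compl (dyad D u v) = orth_compl B"
    unfolding orth_compl_def c by auto
qed

lemma rank_one_if_maximal_orth_compl:
  assumes A: "A \<in> \<A>" and max: "maximal_orth_compl A"
  shows "rank_one D A"
proof -
  have AL: "A \<in> Lplus D" and "A \<noteq> 0"
    using A max by (auto simp: family_Lplus maximal_orth_compl_def)
  then obtain x0 where x0: "x0 \<in> D" "A x0 \<noteq> 0"
    by (auto simp: op_neq_0_iff Lplus_is_op_on)
  define u where "u = A x0"
  define v where "v = ladj D A u"
  have u: "u \<in> D" "u \<noteq> 0" unfolding u_def using x0 AL by (auto simp: op_mem Lplus_is_op_on)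
  have "cinner x0 v = cinner u u"
    unfolding v_def using cinner_ladj_right [OF AL x0(1) u(1)] by (simp add: u_def)
  then have v: "v \<in> D" "v \<noteq> 0" unfolding v_def using AL u by (auto simp: ladj_mem)
  have nz: "dyad D u v \<noteq> 0" using u v by (simp add: dyad_neq_0)
  have "orth D (dyad D u v) C" if "C \<in> orth_compl A" for C
  proof -
    have "orth D A C" "C \<in> Lplus D" using that by (auto simp: orth_compl_def family_Lplus)
    have "orth D C (dyad D u v)"
    proof (subst orth_dyad_iff [OF \<open>C \<in> Lplus D\<close> u v], intro ballI conjI)
      fix y
      assume "y \<in> D"
      then have "cinner u (C y) = 0" "cinner v (ladj D C y) = 0"
        using \<open>orth D A C\<close> x0(1) u(1) unfolding orth_def u_def v_def by auto
      then show "cinner (C y) u = 0" "cinner (ladj D C y) v = 0"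
        by (metis cinner_commute complex_cnj_zero)+
    qed
    then show ?thesis by (rule orth_sym)
  qed
  then have "orth_compl A \<subseteq> orth_compl (dyad D u v)"
    unfolding orth_compl_def by blast
  then have eq: "orth_compl A = orth_compl (dyad D u v)"
    using max nz dyad_family [OF A \<open>A \<noteq> 0\<close> u(1) v(1)] unfolding maximal_orth_compl_def by blast
  have "orth D A (dyad D w z)"
    if "w \<in> D" "w \<noteq> 0" "cinner w u = 0" "z \<in> D" "z \<noteq> 0" "cinner z v = 0" for w z
  proof -
    have "dyad D w z \<in> orth_compl (dyad D u v)"
      unfolding orth_compl_def using dyad_family [OF A \<open>A \<noteq> 0\<close> that(1,4)]
        orth_dyad_dyad [OF u v that(1,2) that(4,5) that(3,6)] by blast
    with eq show ?thesis unfolding orth_compl_def by blast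
  qed
  then obtain c where c: "A = dyad D u (c *\<^sub>C v)"
    using eq_dyad_if_orth_dyads [OF AL u v] by blast
  with \<open>A \<noteq> 0\<close> have "c *\<^sub>C v \<noteq> 0" by auto
  then show ?thesis
    unfolding c using u v by (simp add: rank_one_dyad scaleC_mem)
qed

lemma rank_one_iff_maximal_orth_compl:
  assumes A: "A \<in> \<A>"
  shows "rank_one D A \<longleftrightarrow> maximal_orth_compl A"
proof
  assume "rank_one D A"
  then obtain u v where "u \<in> D" "v \<in> D" "u \<noteq> 0" "v \<noteq> 0" "A = dyad D u v"
    using rank_one_iff_dyad [OF family_Lplus [OF A]] by blast
  with A show "maximal_orth_compl A" by (simp add: maximal_orth_compl_dyad)
qed (rule rank_one_if_maximal_orth_compl [OF A])

end

section \<open>Orthogonality preserving additive bijections\<close>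

lemma inj_on_image_subset_iff:
  assumes "inj_on f C" "A \<subseteq> C" "B \<subseteq> C"
  shows "f ` A \<subseteq> f ` B \<longleftrightarrow> A \<subseteq> B"
proof
  assume "f ` A \<subseteq> f ` B"
  then show "A \<subseteq> B"
    using inj_on_image_mem_iff [OF assms(1) _ assms(3)] assms(2) by blast
qed (rule image_mono)

locale orth_preserving_map = standard_family D \<A> for D :: "'a::chilbert set" and \<A> +
  fixes \<Phi> :: "('a \<Rightarrow> 'a) \<Rightarrow> ('a \<Rightarrow> 'a)"
  assumes bij: "bij_betw \<Phi> \<A> \<A>"
    and additive: "A \<in> \<A> \<Longrightarrow> B \<in> \<A> \<Longrightarrow> \<Phi> (A + B) = \<Phi> A + \<Phi> B"
    and orth_preserving: "A \<in> \<A> \<Longrightarrow> B \<in> \<A> \<Longrightarrow> orth D (\<Phi> A) (\<Phi> B) \<longleftrightarrow> orth D A B"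
begin

lemma map_family: "A \<in> \<A> \<Longrightarrow> \<Phi> A \<in> \<A>"
  using bij bij_betwE by blast

lemma map_zero: "\<Phi> 0 = 0"
  using additive [OF zero_family zero_family] by simp

lemma map_eq_0_iff: "A \<in> \<A> \<Longrightarrow> \<Phi> A = 0 \<longleftrightarrow> A = 0"
  using bij map_zero zero_family by (metis bij_betw_def inj_on_eq_iff)

lemma inverse: "orth_preserving_map D \<A> (inv_into \<A> \<Phi>)"
proof unfold_locales
  have inj: "inj_on \<Phi> \<A>" using bij by (simp add: bij_betw_def)
  show "bij_betw (inv_into \<A> \<Phi>) \<A> \<A>"
    using bij_betw_inv_into [OF bij] .
  have inv: "inv_into \<A> \<Phi> (\<Phi> C) = C" if "C \<in> \<A>" for C
    using inj that by (rule inv_into_f_f)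
  fix A B
  assume "A \<in> \<A>" "B \<in> \<A>"
  then obtain A' B' where A': "A' \<in> \<A>" "A = \<Phi> A'" and B': "B' \<in> \<A>" "B = \<Phi> B'"
    using bij by (metis bij_betw_imp_surj_on imageE)
  then have "A + B = \<Phi> (A' + B')" by (simp add: additive)
  then show "inv_into \<A> \<Phi> (A + B) = inv_into \<A> \<Phi> A + inv_into \<A> \<Phi> B"
    using A' B' by (simp add: inv add_family)
  show "orth D (inv_into \<A> \<Phi> A) (inv_into \<A> \<Phi> B) \<longleftrightarrow> orth D A B"
    using A' B' by (simp add: inv orth_preserving)
qed

lemma orth_compl_map:
  assumes A: "A \<in> \<A>"
  shows "orth_compl (\<Phi> A) = \<Phi> ` orth_compl A"
proof -
  have compl: "{C \<in> \<A>. orth D (\<Phi> A) (\<Phi> C)} = orth_compl A"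
    using A by (auto simp: orth_compl_def orth_preserving)
  have "orth_compl (\<Phi> A) = {C \<in> \<Phi> ` \<A>. orth D (\<Phi> A) C}"
    using bij by (simp add: orth_compl_def bij_betw_def)
  also have "\<dots> = \<Phi> ` {C \<in> \<A>. orth D (\<Phi> A) (\<Phi> C)}"
    by blast
  finally show ?thesis unfolding compl .
qed

lemma maximal_orth_compl_map:
  assumes A: "A \<in> \<A>"
  shows "maximal_orth_compl (\<Phi> A) \<longleftrightarrow> maximal_orth_compl A"
proof -
  have inj: "inj_on \<Phi> \<A>" and img: "\<Phi> ` \<A> = \<A>" using bij by (simp_all add: bij_betw_def)
  have sub: "orth_compl X \<subseteq> \<A>" for X unfolding orth_compl_def by blast
  have ball: "(\<forall>B\<in>\<A>. P B) \<longleftrightarrow> (\<forall>B\<in>\<A>. P (\<Phi> B))" for P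
  proof (intro iffI ballI)
    fix B
    assume "\<forall>B\<in>\<A>. P B" "B \<in> \<A>"
    then show "P (\<Phi> B)" using map_family by blast
  next
    fix B
    assume all: "\<forall>B\<in>\<A>. P (\<Phi> B)" and "B \<in> \<A>"
    then have "B \<in> \<Phi> ` \<A>" by (simp only: img)
    with all show "P B" by blast
  qed
  have le: "orth_compl (\<Phi> A) \<subseteq> orth_compl (\<Phi> B) \<longleftrightarrow> orth_compl A \<subseteq> orth_compl B"
    if "B \<in> \<A>" for B
    unfolding orth_compl_map [OF A] orth_compl_map [OF that] using inj_on_image_subset_iff [OF inj sub sub] .
  have eq: "orth_compl (\<Phi> A) = orth_compl (\<Phi> B) \<longleftrightarrow> orth_compl A = orth_compl B"
    if "B \<in> \<A>" for B
    unfolding orth_compl_map [OF A] orth_compl_map [OF that] using inj_on_image_eq_iff [OF inj sub sub] .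
  have "maximal_orth_compl (\<Phi> A) \<longleftrightarrow> \<Phi> A \<noteq> 0 \<and> (\<forall>B\<in>\<A>. \<Phi> B \<noteq> 0 \<longrightarrow>
      orth_compl (\<Phi> A) \<subseteq> orth_compl (\<Phi> B) \<longrightarrow> orth_compl (\<Phi> A) = orth_compl (\<Phi> B))"
    unfolding maximal_orth_compl_def using ball [of "\<lambda>B. B \<noteq> 0 \<longrightarrow>
      orth_compl (\<Phi> A) \<subseteq> orth_compl B \<longrightarrow> orth_compl (\<Phi> A) = orth_compl B"] by simp
  also have "\<dots> \<longleftrightarrow> maximal_orth_compl A"
    unfolding maximal_orth_compl_def using A le eq by (simp add: map_eq_0_iff)
  finally show ?thesis .
qed

lemma rank_one_map: "A \<in> \<A> \<Longrightarrow> rank_one D A \<Longrightarrow> rank_one D (\<Phi> A)"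
  by (simp add: rank_one_iff_maximal_orth_compl map_family maximal_orth_compl_map)

lemma finite_rank_map_sum_list:
  "set Bs \<subseteq> \<A> \<Longrightarrow> (\<And>B. B \<in> set Bs \<Longrightarrow> finite_rank D (\<Phi> B)) \<Longrightarrow>
    sum_list Bs \<in> \<A> \<and> finite_rank D (\<Phi> (sum_list Bs))"
proof (induction Bs)
  case Nil
  show ?case unfolding sum_list.Nil map_zero using zero_family finite_rank_zero by blast
next
  case (Cons B Bs)
  then have B: "B \<in> \<A>" "finite_rank D (\<Phi> B)"
    and Bs: "sum_list Bs \<in> \<A>" "finite_rank D (\<Phi> (sum_list Bs))" by auto
  show ?case
    unfolding sum_list.Cons additive [OF B(1) Bs(1)]
    using add_family [OF B(1) Bs(1)] finite_rank_add [OF B(2) Bs(2)] by blast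
qed

lemma finite_rank_map_dyad:
  assumes "A \<in> \<A>" "A \<noteq> 0" "a \<in> D" "b \<in> D"
  shows "dyad D a b \<in> \<A>" "finite_rank D (\<Phi> (dyad D a b))"
proof -
  show dyad: "dyad D a b \<in> \<A>" using assms by (rule dyad_family)
  show "finite_rank D (\<Phi> (dyad D a b))"
    using dyad_eq_0_or_rank_one [OF assms(3,4)] rank_one_map [OF dyad]
    by (auto simp: map_zero finite_rank_zero finite_rank_if_rank_one)
qed

lemma map_Fin:
  assumes F: "F \<in> Fin D \<inter> \<A>"
  shows "\<Phi> F \<in> Fin D \<inter> \<A>"
proof (cases "\<A> = {0}")
  case True
  with F have "F = 0" by blast
  with F show ?thesis by (simp add: map_zero)
next
  case False
  then obtain A where A: "A \<in> \<A>" "A \<noteq> 0" using zero_family by blast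
  obtain ps where ps: "set ps \<subseteq> D \<times> D" "F = (\<Sum>(a, b)\<leftarrow>ps. dyad D a b)"
    using F Fin_eq_sum_dyads by blast
  have "set (map (\<lambda>(a, b). dyad D a b) ps) \<subseteq> \<A>"
    "\<And>B. B \<in> set (map (\<lambda>(a, b). dyad D a b) ps) \<Longrightarrow> finite_rank D (\<Phi> B)"
    using ps(1) finite_rank_map_dyad [OF A] by auto
  then have "finite_rank D (\<Phi> F)" unfolding ps(2) by (blast dest: finite_rank_map_sum_list)
  with F show ?thesis by (simp add: Fin_def map_family family_Lplus)
qed

lemma bij_betw_Fin: "bij_betw \<Phi> (Fin D \<inter> \<A>) (Fin D \<inter> \<A>)"
proof (rule bij_betw_subset [OF bij])
  interpret inv: orth_preserving_map D \<A> "inv_into \<A> \<Phi>" by (rule inverse)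
  show "\<Phi> ` (Fin D \<inter> \<A>) = Fin D \<inter> \<A>"
  proof
    show "\<Phi> ` (Fin D \<inter> \<A>) \<subseteq> Fin D \<inter> \<A>" using map_Fin by blast
    show "Fin D \<inter> \<A> \<subseteq> \<Phi> ` (Fin D \<inter> \<A>)"
    proof
      fix F
      assume F: "F \<in> Fin D \<inter> \<A>"
      then have "F = \<Phi> (inv_into \<A> \<Phi> F)"
        using bij by (simp add: bij_betw_def f_inv_into_f)
      with inv.map_Fin [OF F] show "F \<in> \<Phi> ` (Fin D \<inter> \<A>)" by blast
    qed
  qed
qed blast

end

lemma dense_subspace_csubspace: "dense_subspace D \<Longrightarrow> csubspace D"
  unfolding dense_subspace_def csubspace_def by blast

context csubspace
begin

lemma standard_family_Fin: "standard_family D (Fin D)"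
  unfolding standard_family_def standard_family_axioms_def
  using csubspace_axioms Fin_add dyad_Fin by (auto simp: Fin_def Lplus_zero finite_rank_zero)

lemma standard_family_unital: "unital_standard_star_algebra D \<A> \<Longrightarrow> standard_family D \<A>"
  unfolding standard_family_def standard_family_axioms_def
  using csubspace_axioms dyad_Fin
  by (auto simp: unital_standard_star_algebra_def subalgebra_def zero_op_eq_0 add_op_eq_plus)

lemma standard_family_star_ideal: "star_ideal D \<A> \<Longrightarrow> standard_family D \<A>"
  unfolding standard_family_def standard_family_axioms_def
  using csubspace_axioms star_ideal_dyad
  by (auto simp: star_ideal_def zero_op_eq_0 add_op_eq_plus)

end

theorem mainTheorem4:
  fixes D :: "'a::chilbert set"
    and \<A> :: "('a \<Rightarrow> 'a) set"
    and \<Phi> :: "('a \<Rightarrow> 'a) \<Rightarrow> ('a \<Rightarrow> 'a)"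
  assumes FD: "F_domain D"
    and cases: "\<A> = Fin D \<or> unital_standard_star_algebra D \<A>
                 \<or> (star_ideal D \<A> \<and> \<A> \<noteq> Fin D)"
    and additive: "\<forall>A\<in>\<A>. \<forall>B\<in>\<A>. \<Phi> (add_op A B) = add_op (\<Phi> A) (\<Phi> B)"
    and bij: "bij_betw \<Phi> \<A> \<A>"
    and pres: "\<forall>A\<in>\<A>. \<forall>B\<in>\<A>.
        (ladj D A \<circ> B = zero_op \<and> A \<circ> ladj D B = zero_op) \<longleftrightarrow>
        (ladj D (\<Phi> A) \<circ> \<Phi> B = zero_op \<and> \<Phi> A \<circ> ladj D (\<Phi> B) = zero_op)"
  shows "(\<forall>A\<in>\<A>. rank_one D A \<longrightarrow> rank_one D (\<Phi> A))
       \<and> (\<forall>A\<in>\<A>. rank_one D A \<longrightarrow> rank_one D (inv_into \<A> \<Phi> A))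
       \<and> bij_betw \<Phi> (Fin D \<inter> \<A>) (Fin D \<inter> \<A>)"
proof -
  interpret csubspace D
    using FD by (simp add: F_domain_def dense_subspace_csubspace)
  interpret standard_family D \<A>
    using cases standard_family_Fin standard_family_unital standard_family_star_ideal by blast
  interpret orth_preserving_map D \<A> \<Phi>
  proof
    fix A B
    assume A: "A \<in> \<A>" and B: "B \<in> \<A>"
    then show "\<Phi> (A + B) = \<Phi> A + \<Phi> B"
      using additive unfolding add_op_eq_plus by blast
    have "(ladj D A \<circ> B = 0 \<and> A \<circ> ladj D B = 0) \<longleftrightarrow>
        (ladj D (\<Phi> A) \<circ> \<Phi> B = 0 \<and> \<Phi> A \<circ> ladj D (\<Phi> B) = 0)"
      using pres A B unfolding zero_op_eq_0 by blast
    moreover have "\<Phi> A \<in> \<A>" "\<Phi> B \<in> \<A>" using A B bij bij_betwE by blast+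
    ultimately show "orth D (\<Phi> A) (\<Phi> B) \<longleftrightarrow> orth D A B"
      using A B by (simp add: orth_iff_comp_ladj family_Lplus)
  qed (rule bij)
  interpret inv: orth_preserving_map D \<A> "inv_into \<A> \<Phi>" by (rule inverse)
  show ?thesis by (intro conjI ballI impI rank_one_map inv.rank_one_map bij_betw_Fin)
qed

end
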